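(* Let $\alpha\in\mathbb{N}$, let $m$ be a positive odd integer with $m>4\alpha+2$, and let $\mathbb{S}=\langle 4,4\alpha+2,m\rangle$. Put $\beta_1=8\alpha+4$ and $\beta_3=2m$. Then (i) $F(\mathbb{S})=\frac{\beta_1+\beta_3}{2}-4$; (ii) $g(\mathbb{S})=\frac{\beta_1+\beta_3}{4}-\frac{3}{2}$.
   Context: $\mathbb{N}=\{0,1,2,\dots\}$. $\langle a_1,\dots,a_e\rangle$ is the set of $\mathbb{N}$-linear combinations of $a_1,\dots,a_e$. For a numerical semigroup $\mathbb{S}$, the Frobenius number $F(\mathbb{S})$ is the largest integer not in $\mathbb{S}$, and the genus $g(\mathbb{S})$ is the number of positive integers not in $\mathbb{S}$. *)

theory Defs
  imports Complex_Main
begin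

definition gen_semigroup :: "nat list \<Rightarrow> nat set" where
  "gen_semigroup as = {s. \<exists>c :: nat \<Rightarrow> nat. s = (\<Sum>i<length as. c i * as ! i)}"

definition frobenius :: "nat set \<Rightarrow> int" where
  "frobenius S = (GREATEST z :: int. z \<notin> int ` S)"

definition genus :: "nat set \<Rightarrow> nat" where
  "genus S = card {n :: nat. 0 < n \<and> n \<notin> S}"

end

theory Submission
  imports Defs
begin

text \<open>Write \<open>b = 4\<alpha> + 2\<close>. Modulo 4 the numbers \<open>0, b, m, b + m\<close> represent each residue
  exactly once, and \<open>n \<in> \<langle>4, b, m\<rangle>\<close> iff \<open>n\<close> is at least the representative of its residue
  (these four numbers are the Apery set of the semigroup with respect to 4). The Apery set is
  symmetric under \<open>w \<mapsto> b + m - w\<close>, hence \<open>n \<in> S \<longleftrightarrow> b + m - 4 - n \<notin> S\<close>: the semigroup is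
  symmetric with Frobenius number \<open>F = b + m - 4 = (\<beta>\<^sub>1 + \<beta>\<^sub>3)/2 - 4\<close>, and \<open>n \<mapsto> F - n\<close> pairs
  the gaps with the elements of \<open>[0, F]\<close>, so \<open>g = (F + 1)/2\<close>.\<close>

lemma gen_semigroup_Nil [simp]: "gen_semigroup [] = {0}"
  by (simp add: gen_semigroup_def)

lemma gen_semigroup_Cons: "gen_semigroup (a # as) = {c * a + s | c s. s \<in> gen_semigroup as}"
proof -
  have split: "(\<Sum>i<length (a # as). c i * (a # as) ! i) = c 0 * a + (\<Sum>i<length as. c (Suc i) * as ! i)"
    for c :: "nat \<Rightarrow> nat"
    unfolding length_Cons sum.lessThan_Suc_shift by simp
  show ?thesis
  proof (intro set_eqI iffI)
    fix n assume "n \<in> gen_semigroup (a # as)"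
    then obtain c where n: "n = c 0 * a + (\<Sum>i<length as. c (Suc i) * as ! i)"
      unfolding gen_semigroup_def split by blast
    have "(\<Sum>i<length as. c (Suc i) * as ! i) \<in> gen_semigroup as"
      unfolding gen_semigroup_def by (rule CollectI, rule exI[of _ "\<lambda>i. c (Suc i)"]) (rule refl)
    then show "n \<in> {c * a + s | c s. s \<in> gen_semigroup as}"
      unfolding n by blast
  next
    fix n assume "n \<in> {c * a + s | c s. s \<in> gen_semigroup as}"
    then obtain c0 c where "n = c0 * a + (\<Sum>i<length as. c i * as ! i)"
      unfolding gen_semigroup_def by blast
    then have "n = (\<Sum>i<length (a # as). case_nat c0 c i * (a # as) ! i)"
      unfolding split by simp
    then show "n \<in> gen_semigroup (a # as)"
      unfolding gen_semigroup_def by blast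
  qed
qed

lemma gen_semigroup_3: "gen_semigroup [p, q, r] = {x * p + y * q + z * r | x y z. True}"
  by (fastforce simp: gen_semigroup_Cons add.assoc)

lemma add_multiple_mem:
  fixes A :: "nat set"
  assumes "x \<in> A" and "\<And>y. y \<in> A \<Longrightarrow> y + a \<in> A"
  shows "x + c * a \<in> A"
proof (induction c)
  case (Suc c)
  then have "x + c * a + a \<in> A" using assms(2) by blast
  then show ?case by (simp add: algebra_simps)
qed (simp add: assms(1))

lemma gen_semigroup_subsetI:
  assumes "0 \<in> A" and "\<And>a x. a \<in> set as \<Longrightarrow> x \<in> A \<Longrightarrow> x + a \<in> A"
  shows "gen_semigroup as \<subseteq> A"
  using assms(2)
proof (induction as)
  case (Cons a as)
  show ?case
  proof
    fix n assume "n \<in> gen_semigroup (a # as)"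
    then obtain c s where n: "n = c * a + s" and "s \<in> gen_semigroup as"
      unfolding gen_semigroup_Cons by blast
    then have "s \<in> A" using Cons by auto
    then show "n \<in> A"
      using add_multiple_mem[of s A a c] Cons.prems n by (simp add: add.commute)
  qed
qed (simp add: assms(1))

lemma frobenius_eqI:
  fixes S :: "nat set" and F :: nat
  assumes "F \<notin> S" and "\<And>n. F < n \<Longrightarrow> n \<in> S"
  shows "frobenius S = int F"
  unfolding frobenius_def
proof (rule Greatest_equality)
  show "int F \<notin> int ` S" using assms(1) by auto
next
  fix z assume "z \<notin> int ` S"
  then show "z \<le> int F"
    using assms(2) by (cases z rule: int_cases) (auto simp: not_le[symmetric])
qed

lemma genus_eq_if_symmetric:
  fixes S :: "nat set" and F :: nat
  assumes "0 \<in> S" and "\<And>n. F < n \<Longrightarrow> n \<in> S" and "\<And>n. n \<le> F \<Longrightarrow> n \<in> S \<longleftrightarrow> F - n \<notin> S"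
  shows "2 * genus S = F + 1"
proof -
  have gaps: "{n. 0 < n \<and> n \<notin> S} = {..F} - S"
  proof (intro set_eqI iffI)
    fix n assume "n \<in> {n. 0 < n \<and> n \<notin> S}"
    then show "n \<in> {..F} - S" using assms(2) by (auto simp flip: not_less)
  next
    fix n assume "n \<in> {..F} - S"
    then show "n \<in> {n. 0 < n \<and> n \<notin> S}" using assms(1) by (auto intro: gr0I)
  qed
  have "bij_betw (\<lambda>n. F - n) ({..F} \<inter> S) ({..F} - S)"
  proof (rule bij_betw_byWitness[where f' = "\<lambda>n. F - n"])
    show "(\<lambda>n. F - n) ` ({..F} \<inter> S) \<subseteq> {..F} - S"
    proof
      fix x assume "x \<in> (\<lambda>n. F - n) ` ({..F} \<inter> S)"
      then obtain n where "n \<le> F" "n \<in> S" "x = F - n" by auto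
      then show "x \<in> {..F} - S" using assms(3)[of n] by simp
    qed
    show "(\<lambda>n. F - n) ` ({..F} - S) \<subseteq> {..F} \<inter> S"
    proof
      fix x assume "x \<in> (\<lambda>n. F - n) ` ({..F} - S)"
      then obtain n where "n \<le> F" "n \<notin> S" "x = F - n" by auto
      then show "x \<in> {..F} \<inter> S" using assms(3)[of n] by simp
    qed
  qed auto
  then have "card ({..F} \<inter> S) = card ({..F} - S)"
    by (rule bij_betw_same_card)
  moreover have "card {..F} = card ({..F} \<inter> S) + card ({..F} - S)"
    by (rule card_Int_Diff) simp
  ultimately show ?thesis
    unfolding genus_def gaps by simp
qed

lemma mod_eq_less_imp_add_le:
  fixes a b k :: nat
  assumes "a mod k = b mod k" and "a < b" and "0 < k"
  shows "a + k \<le> b"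
proof -
  have "k dvd b - a"
    using assms(1,2) by (simp add: mod_eq_dvd_iff_nat[symmetric])
  then have "k \<le> b - a"
    using assms(2) by (simp add: dvd_imp_le)
  then show ?thesis
    using assms(2) by linarith
qed

text \<open>\<open>W\<close> plays the role of the Apery set of \<open>S\<close> with respect to \<open>k\<close>, and \<open>M\<close> its maximum.\<close>

locale symmetric_apery_set =
  fixes S W :: "nat set" and k M :: nat
  assumes mem_iff: "n \<in> S \<longleftrightarrow> (\<exists>w\<in>W. w \<le> n \<and> w mod k = n mod k)"
    and residue_cover: "\<exists>w\<in>W. w mod k = n mod k"
    and residue_inj: "w \<in> W \<Longrightarrow> w' \<in> W \<Longrightarrow> w mod k = w' mod k \<Longrightarrow> w = w'"
    and zero_in: "0 \<in> W"
    and reflect: "w \<in> W \<Longrightarrow> w \<le> M \<and> M - w \<in> W"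
    and k_pos: "0 < k"
    and k_le: "k \<le> M"
begin

lemma mem_iff_rep_le:
  assumes "w \<in> W" and "w mod k = n mod k"
  shows "n \<in> S \<longleftrightarrow> w \<le> n"
  using assms mem_iff residue_inj by metis

lemma mem_iff_not_mem_sym:
  assumes "n + n' + k = M"
  shows "n \<in> S \<longleftrightarrow> n' \<notin> S"
proof -
  obtain w where w: "w \<in> W" "w mod k = n mod k"
    using residue_cover by blast
  define w' where "w' = M - w"
  have w': "w' \<in> W" "w + w' = M"
    using reflect[OF w(1)] unfolding w'_def by auto
  have "(n + w') mod k = (n + n') mod k"
  proof -
    have "(n + w') mod k = (w + w') mod k"
      using w(2) by (metis mod_add_cong)
    also have "\<dots> = (n + n' + k) mod k"
      using w'(2) assms by simp
    finally show ?thesis by simp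
  qed
  then have w'_mod: "w' mod k = n' mod k"
    by (simp add: nat_mod_eq_iff)
  have "w \<le> n \<longleftrightarrow> \<not> w' \<le> n'"
  proof
    assume "w \<le> n"
    then show "\<not> w' \<le> n'" using assms w'(2) k_pos by linarith
  next
    assume "\<not> w' \<le> n'"
    then have "n' + k \<le> w'"
      using mod_eq_less_imp_add_le[OF w'_mod[symmetric] _ k_pos] by simp
    then show "w \<le> n" using assms w'(2) by linarith
  qed
  then show ?thesis
    using mem_iff_rep_le[OF w] mem_iff_rep_le[OF w'(1) w'_mod] by blast
qed

lemma mem_if_gt:
  assumes "M - k < n"
  shows "n \<in> S"
proof -
  obtain w where w: "w \<in> W" "w mod k = n mod k"
    using residue_cover by blast
  have "w \<le> n"
  proof (rule ccontr)
    assume "\<not> w \<le> n"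
    then have "n + k \<le> w"
      using mod_eq_less_imp_add_le[OF w(2)[symmetric] _ k_pos] by simp
    then show False using reflect[OF w(1)] assms k_le by linarith
  qed
  then show ?thesis using mem_iff_rep_le[OF w] by blast
qed

lemma frobenius_eq: "frobenius S = int (M - k)"
proof (rule frobenius_eqI)
  have "M \<in> W" using reflect[OF zero_in] by simp
  then have "M - k \<in> S \<longleftrightarrow> M \<le> M - k"
    using mem_iff_rep_le mod_add_self2[of "M - k" k] k_le by simp
  then show "M - k \<notin> S" using k_pos k_le by linarith
qed (rule mem_if_gt)

lemma genus_eq: "2 * genus S = M - k + 1"
proof (rule genus_eq_if_symmetric)
  show "0 \<in> S" using mem_iff zero_in by auto
next
  show "n \<in> S \<longleftrightarrow> M - k - n \<notin> S" if "n \<le> M - k" for n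
    using mem_iff_not_mem_sym that k_le by simp
qed (rule mem_if_gt)

end

lemma mem_gen_semigroup_4_iff:
  fixes b m n :: nat
  assumes b: "b mod 4 = 2" and m: "odd m" and b_le: "b \<le> 2 * m"
  shows "n \<in> gen_semigroup [4, b, m] \<longleftrightarrow> (\<exists>w\<in>{0, b, m, b + m}. w \<le> n \<and> w mod 4 = n mod 4)"
proof
  assume n: "n \<in> gen_semigroup [4, b, m]"
  let ?W = "{0, b, m, b + m}"
  let ?A = "{n. \<exists>w\<in>?W. w \<le> n \<and> w mod 4 = n mod 4}"
  have residues: "(b + b) mod 4 = 0" "(m + m) mod 4 = b mod 4"
      "(b + m + b) mod 4 = m mod 4" "(b + m + m) mod 4 = 0"
    using b m by presburger+
  txt \<open>The representative for \<open>m + m\<close> is \<open>b\<close>; this is where \<open>b \<le> 2 * m\<close> is used.\<close>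
  have rep_shift: "\<exists>w'\<in>?W. w' \<le> w + a \<and> w' mod 4 = (w + a) mod 4"
    if "a \<in> set [4, b, m]" and "w \<in> ?W" for a w
    using that unfolding list.set insert_iff empty_iff
    by (elim disjE) (use residues b_le in \<open>simp_all add: add.commute\<close>)
  have "gen_semigroup [4, b, m] \<subseteq> ?A"
  proof (rule gen_semigroup_subsetI)
    fix a x assume a: "a \<in> set [4, b, m]" and "x \<in> ?A"
    then obtain w where w: "w \<in> ?W" "w \<le> x" "w mod 4 = x mod 4" by blast
    then obtain w' where w': "w' \<in> ?W" "w' \<le> w + a" "w' mod 4 = (w + a) mod 4"
      using rep_shift[OF a] by blast
    have "w' \<le> x + a" using w(2) w'(2) by linarith
    moreover have "w' mod 4 = (x + a) mod 4"
      using w(3) w'(3) by (metis mod_add_left_eq)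
    ultimately show "x + a \<in> ?A"
      using w'(1) by blast
  qed simp
  with n show "\<exists>w\<in>?W. w \<le> n \<and> w mod 4 = n mod 4" by blast
next
  assume "\<exists>w\<in>{0, b, m, b + m}. w \<le> n \<and> w mod 4 = n mod 4"
  then obtain w where w: "w \<in> {0, b, m, b + m}" "w \<le> n" "w mod 4 = n mod 4" by blast
  obtain y z where wyz: "w = y * b + z * m"
    using w(1) by (elim insertE emptyE) (metis mult_1 mult_0 add_0 add_0_right)+
  have "4 dvd n - w"
    using mod_eq_dvd_iff_nat[OF w(2), of 4] w(3) by simp
  then obtain t where "n - w = 4 * t" ..
  then have "n = t * 4 + y * b + z * m"
    using w(2) wyz by simp
  then show "n \<in> gen_semigroup [4, b, m]"
    unfolding gen_semigroup_3 by blast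
qed

lemma symmetric_apery_set_gen_semigroup_4:
  fixes b m :: nat
  assumes b: "b mod 4 = 2" and m: "odd m" "1 < m" and b_le: "b \<le> 2 * m"
  shows "symmetric_apery_set (gen_semigroup [4, b, m]) {0, b, m, b + m} 4 (b + m)"
proof
  have odd_residues: "m mod 4 = 1 \<and> (b + m) mod 4 = 3 \<or> m mod 4 = 3 \<and> (b + m) mod 4 = 1"
    using b m(1) by presburger
  show "n \<in> gen_semigroup [4, b, m] \<longleftrightarrow> (\<exists>w\<in>{0, b, m, b + m}. w \<le> n \<and> w mod 4 = n mod 4)" for n
    by (rule mem_gen_semigroup_4_iff[OF b m(1) b_le])
  show "\<exists>w\<in>{0, b, m, b + m}. w mod 4 = n mod 4" for n
  proof -
    have "n mod 4 = 0 \<or> n mod 4 = 1 \<or> n mod 4 = 2 \<or> n mod 4 = 3"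
      by presburger
    then show ?thesis
      using b odd_residues by (elim disjE conjE) auto
  qed
  show "w = w'" if "w \<in> {0, b, m, b + m}" "w' \<in> {0, b, m, b + m}" "w mod 4 = w' mod 4" for w w'
    using that b odd_residues by (elim insertE emptyE disjE conjE) auto
  show "w \<le> b + m \<and> b + m - w \<in> {0, b, m, b + m}" if "w \<in> {0, b, m, b + m}" for w
    using that by auto
  show "4 \<le> b + m"
    using b m by presburger
qed simp_all

theorem corollary1:
  fixes \<alpha> m :: nat
  assumes "odd m" and "0 < m" and "m > 4 * \<alpha> + 2"
  defines "S \<equiv> gen_semigroup [4, 4 * \<alpha> + 2, m]"
  defines "\<beta>\<^sub>1 \<equiv> 8 * \<alpha> + 4"
  defines "\<beta>\<^sub>3 \<equiv> 2 * m"
  shows "real_of_int (frobenius S) = (real \<beta>\<^sub>1 + real \<beta>\<^sub>3) / 2 - 4 \<and>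
         real (genus S) = (real \<beta>\<^sub>1 + real \<beta>\<^sub>3) / 4 - 3 / 2"
proof -
  define b where "b = 4 * \<alpha> + 2"
  have "b mod 4 = 2" and "1 < m" and "b \<le> 2 * m" and "4 \<le> b + m"
    using assms(3) unfolding b_def by presburger+
  then interpret symmetric_apery_set S "{0, b, m, b + m}" 4 "b + m"
    unfolding S_def b_def[symmetric] using assms(1) symmetric_apery_set_gen_semigroup_4 by blast
  show ?thesis
    using frobenius_eq genus_eq \<open>4 \<le> b + m\<close> unfolding \<beta>\<^sub>1_def \<beta>\<^sub>3_def b_def
    by (simp add: field_simps)
qed

end
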